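(* Consider a one-step MDP ($T=1$) with a single state $\mathcal{S}=\{s_0\}$, action space equal to the goal space $\mathcal{A}=\mathcal{G}$ with $|\mathcal{A}|=|\mathcal{G}|=k$, and reward $r(s,a,g)=\mathbb{I}[a=g]$. Let the policy be $\pi(a\mid s_0,g)=\exp(L_{a,g})/\sum_{b\in\mathcal{A}}\exp(L_{b,g})$ with logits $L_{a,g}$, let the goal distribution be uniform, $p(g)=1/k$ for all $g\in\mathcal{G}$, and suppose the policy is at its initialization $L_{a,g}\equiv L$ for all $a,g$ (some constant $L$). For $a\in\mathcal{A},g\in\mathcal{G}$, let $\eta_{a,g}=r(s_0,b,g')\,\frac{\partial}{\partial L_{a,g}}\log\pi(b\mid s_0,g')$, where $g'\sim p(\cdot)$ and $b\sim\pi(\cdot\mid s_0,g')$, be the one-sample REINFORCE estimator of $\frac{\partial}{\partial L_{a,g}}J$, with $J=\mathbb{E}_{g\sim p}\mathbb{E}_{a\sim\pi(\cdot\mid s_0,g)}[r(s_0,a,g)]$. For a random variable $x$ define $\mathrm{MSE}[x]:=\mathbb{E}[(x-\mathbb{E}[\eta_{a,g}])^2]$. Then for every $a\in\mathcal{A}$ and $g\in\mathcal{G}$, as $k\to\infty$, $$\frac{\sqrt{\mathrm{MSE}[\eta_{a,g}]}}{\big|\mathbb{E}[\eta_{a,g}]\big|}=k\,(1+o(1)).$$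
   Context: $o(1)$ denotes a quantity tending to $0$ as $k\to\infty$. *)

theory Defs
  imports "HOL-Analysis.Analysis"
begin

text \<open>One-step MDP with a single state s0 (suppressed), actions = goals = {0..<k}.
  Logits are a function Lg :: nat => nat => real, Lg b g = logit of action b for goal g.\<close>

definition reward :: "nat \<Rightarrow> nat \<Rightarrow> real" where
  "reward b g = (if b = g then 1 else 0)"

definition policy :: "nat \<Rightarrow> (nat \<Rightarrow> nat \<Rightarrow> real) \<Rightarrow> nat \<Rightarrow> nat \<Rightarrow> real" where
  "policy k Lg b g = exp (Lg b g) / (\<Sum>c<k. exp (Lg c g))"

definition upd_logit :: "(nat \<Rightarrow> nat \<Rightarrow> real) \<Rightarrow> nat \<Rightarrow> nat \<Rightarrow> real \<Rightarrow> nat \<Rightarrow> nat \<Rightarrow> real" where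
  "upd_logit Lg a g t = (\<lambda>a' g'. if a' = a \<and> g' = g then t else Lg a' g')"

definition dlogpi :: "nat \<Rightarrow> (nat \<Rightarrow> nat \<Rightarrow> real) \<Rightarrow> nat \<Rightarrow> nat \<Rightarrow> nat \<Rightarrow> nat \<Rightarrow> real" where
  "dlogpi k Lg a g b g' = deriv (\<lambda>t. ln (policy k (upd_logit Lg a g t) b g')) (Lg a g)"

definition eta :: "nat \<Rightarrow> (nat \<Rightarrow> nat \<Rightarrow> real) \<Rightarrow> nat \<Rightarrow> nat \<Rightarrow> nat \<Rightarrow> nat \<Rightarrow> real" where
  "eta k Lg a g g' b = reward b g' * dlogpi k Lg a g b g'"

definition expect :: "nat \<Rightarrow> (nat \<Rightarrow> nat \<Rightarrow> real) \<Rightarrow> (nat \<Rightarrow> nat \<Rightarrow> real) \<Rightarrow> real" where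
  "expect k Lg X = (\<Sum>g'<k. \<Sum>b<k. (1 / real k) * policy k Lg b g' * X g' b)"

definition mean_eta :: "nat \<Rightarrow> (nat \<Rightarrow> nat \<Rightarrow> real) \<Rightarrow> nat \<Rightarrow> nat \<Rightarrow> real" where
  "mean_eta k Lg a g = expect k Lg (eta k Lg a g)"

definition mse_eta :: "nat \<Rightarrow> (nat \<Rightarrow> nat \<Rightarrow> real) \<Rightarrow> nat \<Rightarrow> nat \<Rightarrow> real" where
  "mse_eta k Lg a g = expect k Lg (\<lambda>g' b. (eta k Lg a g g' b - mean_eta k Lg a g)^2)"

end

theory Submission
  imports Defs "HOL-Real_Asymp.Real_Asymp"
begin

text \<open>The score of a softmax policy is
  \<open>\<partial> log \<pi>(b | g') / \<partial> L\<^sub>a\<^sub>,\<^sub>g = [g' = g] ([b = a] - \<pi>(a | g))\<close>, so with the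
  indicator reward the estimator \<open>\<eta>\<^sub>a\<^sub>,\<^sub>g\<close> is nonzero only on the single sample
  \<open>(g', b) = (g, g)\<close>. A random variable that is a nonzero constant \<open>c\<close> on an event of
  probability \<open>p\<close> and zero elsewhere has mean \<open>c p\<close> and variance \<open>c\<^sup>2 p (1 - p)\<close>, hence
  relative error \<open>sqrt ((1 - p) / p)\<close>. At uniform logits \<open>p = 1/k\<^sup>2\<close>, which gives
  \<open>sqrt (k\<^sup>2 - 1) = k (1 + o(1))\<close>.\<close>

lemma sum_exp_logits_pos:
  fixes Lg :: "nat \<Rightarrow> nat \<Rightarrow> real"
  assumes "0 < k"
  shows "0 < (\<Sum>c<k. exp (Lg c g))"
  using assms by (intro sum_pos) auto

lemma policy_pos: "0 < k \<Longrightarrow> 0 < policy k Lg b g"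
  by (simp add: policy_def sum_exp_logits_pos)

lemma sum_policy: "0 < k \<Longrightarrow> (\<Sum>b<k. policy k Lg b g) = 1"
  using sum_exp_logits_pos[of k Lg g]
  by (simp add: policy_def flip: sum_divide_distrib)

lemma policy_less_one:
  assumes "b < k" "2 \<le> k"
  shows "policy k Lg b g < 1"
proof -
  define d where "d = (if b = 0 then 1 else 0 :: nat)"
  have d: "d < k" "d \<noteq> b"
    using assms by (auto simp: d_def)
  have "exp (Lg b g) < exp (Lg b g) + exp (Lg d g)" by simp
  also have "\<dots> = (\<Sum>c\<in>{b, d}. exp (Lg c g))" using d by simp
  also have "\<dots> \<le> (\<Sum>c<k. exp (Lg c g))"
    using assms d by (intro sum_mono2) auto
  finally show ?thesis
    using sum_exp_logits_pos[of k Lg g] assms by (simp add: policy_def)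
qed

lemma policy_uniform: "0 < k \<Longrightarrow> policy k (\<lambda>_ _. L) b g = 1 / real k"
  by (simp add: policy_def)

lemma sum_exp_upd_logit:
  assumes "a < k"
  shows "(\<Sum>c<k. exp (upd_logit Lg a g t c g)) = exp t + (\<Sum>c\<in>{..<k} - {a}. exp (Lg c g))"
  using assms by (simp add: upd_logit_def sum.remove[of _ a])

lemma dlogpi_softmax:
  assumes "a < k"
  shows "dlogpi k Lg a g b g' =
    (if g' = g then (if b = a then 1 else 0) - policy k Lg a g else 0)"
proof (cases "g' = g")
  case False
  then have "(\<lambda>t. ln (policy k (upd_logit Lg a g t) b g')) = (\<lambda>t. ln (policy k Lg b g'))"
    by (simp add: upd_logit_def policy_def)
  then show ?thesis using False by (simp add: dlogpi_def)
next
  case True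
  define S where "S = (\<Sum>c\<in>{..<k} - {a}. exp (Lg c g))"
  have S_nonneg: "0 \<le> S" unfolding S_def by (intro sum_nonneg) auto
  have total: "exp (Lg a g) + S = (\<Sum>c<k. exp (Lg c g))"
    using assms unfolding S_def by (simp add: sum.remove[of _ a])
  have "ln (policy k (upd_logit Lg a g t) b g) = (if b = a then t else Lg b g) - ln (exp t + S)"
    for t
    using assms add_pos_nonneg[OF exp_gt_zero S_nonneg, of t]
    by (simp add: policy_def sum_exp_upd_logit S_def ln_div) (simp add: upd_logit_def)
  moreover have "((\<lambda>t. (if b = a then t else Lg b g) - ln (exp t + S)) has_real_derivative
      (if b = a then 1 else 0) - exp (Lg a g) / (exp (Lg a g) + S)) (at (Lg a g))"
    using add_pos_nonneg[OF exp_gt_zero S_nonneg]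
    by (cases "b = a") (auto intro!: derivative_eq_intros)
  ultimately show ?thesis
    using True total by (simp add: dlogpi_def policy_def DERIV_imp_deriv)
qed

lemma eta_softmax:
  assumes "a < k"
  shows "eta k Lg a g g' b =
    (if g' = g \<and> b = g then (if g = a then 1 else 0) - policy k Lg a g else 0)"
  using dlogpi_softmax[OF assms] by (auto simp: eta_def reward_def)

lemma expect_const:
  assumes "0 < k"
  shows "expect k Lg (\<lambda>_ _. c) = c"
proof -
  have "expect k Lg (\<lambda>_ _. c) = (\<Sum>g'<k. c / real k * (\<Sum>b<k. policy k Lg b g'))"
    by (simp add: expect_def sum_distrib_left mult_ac)
  also have "\<dots> = c"
    using assms by (simp add: sum_policy)
  finally show ?thesis .
qed

lemma expect_add: "expect k Lg (\<lambda>g' b. X g' b + Y g' b) = expect k Lg X + expect k Lg Y"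
  by (simp add: expect_def distrib_left sum.distrib)

lemma expect_point:
  assumes "g < k" "h < k"
  shows "expect k Lg (\<lambda>g' b. if g' = g \<and> b = h then c else 0) = c * (policy k Lg h g / real k)"
proof -
  have "expect k Lg (\<lambda>g' b. if g' = g \<and> b = h then c else 0) =
      (\<Sum>g'<k. \<Sum>b<k. if g' = g then if b = h then c * (policy k Lg h g / real k) else 0 else 0)"
    unfolding expect_def by (intro sum.cong refl) auto
  also have "\<dots> = (\<Sum>g'<k. if g' = g then c * (policy k Lg h g / real k) else 0)"
    using assms by (intro sum.cong refl) auto
  also have "\<dots> = c * (policy k Lg h g / real k)"
    using assms by simp
  finally show ?thesis .
qed

lemma expect_point_variance:
  fixes Lg :: "nat \<Rightarrow> nat \<Rightarrow> real"
  assumes "g < k" "h < k"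
  defines "p \<equiv> policy k Lg h g / real k"
  shows "expect k Lg (\<lambda>g' b. ((if g' = g \<and> b = h then c else 0) - c * p)\<^sup>2) = c\<^sup>2 * p * (1 - p)"
proof -
  have "(\<lambda>g' b. ((if g' = g \<and> b = h then c else 0) - c * p)\<^sup>2) =
      (\<lambda>g' b. (c * p)\<^sup>2 + (if g' = g \<and> b = h then c\<^sup>2 - 2 * c\<^sup>2 * p else 0))"
    by (auto simp: fun_eq_iff power2_eq_square algebra_simps)
  moreover have "expect k Lg (\<lambda>g' b. if g' = g \<and> b = h then c\<^sup>2 - 2 * c\<^sup>2 * p else 0) =
      (c\<^sup>2 - 2 * c\<^sup>2 * p) * p"
    using expect_point[OF assms(1,2)] unfolding p_def .
  ultimately show ?thesis
    using assms(1) by (simp add: expect_add expect_const power2_eq_square algebra_simps)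
qed

lemma sqrt_variance_div_mean:
  fixes c p :: real
  assumes "c \<noteq> 0" "0 < p"
  shows "sqrt (c\<^sup>2 * p * (1 - p)) / \<bar>c * p\<bar> = sqrt ((1 - p) / p)"
proof -
  have "c\<^sup>2 * p * (1 - p) = (\<bar>c\<bar> * p)\<^sup>2 * ((1 - p) / p)"
    using assms by (simp add: field_simps power2_eq_square)
  also have "sqrt \<dots> = \<bar>c\<bar> * p * sqrt ((1 - p) / p)"
    using assms by (subst real_sqrt_mult) simp
  finally have "sqrt (c\<^sup>2 * p * (1 - p)) = \<bar>c\<bar> * p * sqrt ((1 - p) / p)" .
  then show ?thesis
    using assms by (simp add: abs_mult)
qed

lemma relative_error_eta:
  fixes Lg :: "nat \<Rightarrow> nat \<Rightarrow> real"
  assumes "a < k" "g < k" "2 \<le> k"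
  defines "p \<equiv> policy k Lg g g / real k"
  shows "sqrt (mse_eta k Lg a g) / \<bar>mean_eta k Lg a g\<bar> = sqrt ((1 - p) / p)"
proof -
  define c where "c = (if g = a then 1 else 0) - policy k Lg a g"
  have c_nonzero: "c \<noteq> 0"
    using policy_pos[of k Lg a g] policy_less_one[OF assms(1,3), of Lg g] assms
    by (auto simp: c_def)
  have p_pos: "0 < p"
    using assms policy_pos[of k Lg g g] by (simp add: p_def)
  have eta: "eta k Lg a g = (\<lambda>g' b. if g' = g \<and> b = g then c else 0)"
    using eta_softmax[OF assms(1)] by (simp add: fun_eq_iff c_def)
  have mean: "mean_eta k Lg a g = c * p"
    using expect_point[OF assms(2,2)] by (simp add: mean_eta_def eta p_def)
  have "mse_eta k Lg a g = c\<^sup>2 * p * (1 - p)"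
    using expect_point_variance[OF assms(2,2)] by (simp add: mse_eta_def eta mean p_def)
  then show ?thesis
    using sqrt_variance_div_mean[OF c_nonzero p_pos] by (simp add: mean)
qed

lemma relative_error_eta_uniform:
  assumes "a < k" "g < k" "2 \<le> k"
  shows "sqrt (mse_eta k (\<lambda>_ _. L) a g) / \<bar>mean_eta k (\<lambda>_ _. L) a g\<bar> = sqrt ((real k)\<^sup>2 - 1)"
proof -
  have p: "policy k (\<lambda>_ _. L) g g / real k = 1 / (real k)\<^sup>2"
    using assms by (simp add: policy_uniform power2_eq_square)
  have "sqrt (mse_eta k (\<lambda>_ _. L) a g) / \<bar>mean_eta k (\<lambda>_ _. L) a g\<bar> =
      sqrt ((1 - 1 / (real k)\<^sup>2) / (1 / (real k)\<^sup>2))"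
    using relative_error_eta[OF assms, of "\<lambda>_ _. L"] unfolding p .
  also have "(1 - 1 / (real k)\<^sup>2) / (1 / (real k)\<^sup>2) = (real k)\<^sup>2 - 1"
    using assms by (simp add: field_simps)
  finally show ?thesis .
qed

theorem theorem1:
  fixes L :: real and a g :: "nat \<Rightarrow> nat"
  assumes "\<forall>k\<ge>1. a k < k \<and> g k < k"
  shows "((\<lambda>k. (sqrt (mse_eta k (\<lambda>_ _. L) (a k) (g k))
                   / \<bar>mean_eta k (\<lambda>_ _. L) (a k) (g k)\<bar>) / real k) \<longlongrightarrow> 1) sequentially"
proof -
  have "\<forall>\<^sub>F k in sequentially. sqrt ((real k)\<^sup>2 - 1) / real k =
      (sqrt (mse_eta k (\<lambda>_ _. L) (a k) (g k)) / \<bar>mean_eta k (\<lambda>_ _. L) (a k) (g k)\<bar>) / real k"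
    using eventually_ge_at_top[of 2]
    by eventually_elim (use assms relative_error_eta_uniform in auto)
  moreover have "((\<lambda>k. sqrt ((real k)\<^sup>2 - 1) / real k) \<longlongrightarrow> 1) sequentially"
    by real_asymp
  ultimately show ?thesis
    by (rule Lim_transform_eventually[rotated])
qed

end
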